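(* Let $\nu$ be a Lévy measure concentrated on $\mathbb{Z}^n\setminus\{\mathbf{0}\}$ with $\int_{\mathbb{R}^n}\min(1,\|\mathbf{y}\|)\nu(d\mathbf{y})<\infty$, let $N$ be a homogeneous Poisson random measure on $\mathbb{R}^n\times[0,1]\times\mathbb{R}$ with intensity $\nu(d\mathbf{y})\,dx\,ds$, and $\mathbf{L}=(L^{(1)},\dots,L^{(n)})^\top$, $\mathbf{L}(dx,ds)=\int_{\mathbb{R}^n}\mathbf{y}\,N(d\mathbf{y},dx,ds)$. Fix $i\in\{1,\dots,n\}$ and let $d^{(i)}:(-\infty,0]\to[0,1]$ be continuous with $\int_{-\infty}^0d^{(i)}(s)\,ds<\infty$. Then $$X^{(i)}_{0,t}:=L^{(i)}\big(\{(x,s):s\le0,\ 0\le x\le d^{(i)}(s-t)\}\big)\to0\quad\text{in probability as }t\to\infty.$$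
   Context: $X^{(i)}_{0,t}$ is the contribution, to the $i$-th component $Y^{(i)}_t=L^{(i)}(\{(x,s):s\le t,\ 0\le x\le d^{(i)}(s-t)\})$ of the trawl process, coming from the part of the trawl lying at times $s\le0$. *)

theory Defs
  imports "HOL-Probability.Probability"
begin

definition levy_measure :: "(real ^ 'n) measure \<Rightarrow> bool" where
  "levy_measure \<nu> \<longleftrightarrow> sets \<nu> = sets borel \<and> emeasure \<nu> {0} = 0 \<and>
     (\<integral>\<^sup>+ y. ennreal (min 1 ((norm y)\<^sup>2)) \<partial>\<nu>) < \<infinity>"

definition int_lattice :: "(real ^ 'n) set" where
  "int_lattice = {y. \<forall>j. y $ j \<in> \<int>}"

definition poisson_random_measure :: "'w measure \<Rightarrow> 's measure \<Rightarrow> ('w \<Rightarrow> 's measure) \<Rightarrow> bool" where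
  "poisson_random_measure M \<mu> N \<longleftrightarrow>
     prob_space M \<and>
     (\<forall>\<omega>\<in>space M. sets (N \<omega>) = sets \<mu>) \<and>
     (\<forall>B\<in>sets \<mu>. (\<lambda>\<omega>. emeasure (N \<omega>) B) \<in> borel_measurable M) \<and>
     (\<forall>B\<in>sets \<mu>. emeasure \<mu> B < \<infinity> \<longrightarrow>
        (\<forall>k::nat. measure M {\<omega>\<in>space M. emeasure (N \<omega>) B = of_nat k} =
           enn2real (emeasure \<mu> B) ^ k / fact k * exp (- enn2real (emeasure \<mu> B)))) \<and>
     (\<forall>B\<in>sets \<mu>. emeasure \<mu> B = \<infinity> \<longrightarrow>
        measure M {\<omega>\<in>space M. emeasure (N \<omega>) B = \<infinity>} = 1) \<and>
     (\<forall>(B :: nat \<Rightarrow> 's set) J. finite J \<longrightarrow> B ` J \<subseteq> sets \<mu> \<longrightarrow> disjoint_family_on B J \<longrightarrow>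
        prob_space.indep_vars M (\<lambda>_. borel) (\<lambda>j \<omega>. emeasure (N \<omega>) (B j)) J)"

definition trawl_intensity :: "(real ^ 'n) measure \<Rightarrow> ((real ^ 'n) \<times> real \<times> real) measure" where
  "trawl_intensity \<nu> = \<nu> \<Otimes>\<^sub>M (restrict_space lborel {0..1} \<Otimes>\<^sub>M lborel)"

definition levy_basis_comp :: "('w \<Rightarrow> ((real ^ 'n) \<times> real \<times> real) measure) \<Rightarrow> 'n \<Rightarrow>
    (real \<times> real) set \<Rightarrow> 'w \<Rightarrow> real" where
  "levy_basis_comp N i A \<omega> = (\<integral> z. indicator A (snd z) * (fst z $ i) \<partial>(N \<omega>))"

definition past_trawl_set :: "(real \<Rightarrow> real) \<Rightarrow> real \<Rightarrow> (real \<times> real) set" where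
  "past_trawl_set d t = {(x, s). s \<le> 0 \<and> 0 \<le> x \<and> x \<le> d (s - t)}"

end

theory Submission
  imports Defs
begin

text \<open>Since \<open>\<nu>\<close> lives on \<open>\<int>\<^sup>n - {0}\<close>, where \<open>min 1 \<parallel>y\<parallel> = 1\<close>, the Levy measure is finite.
  The Poisson count of \<open>\<real>\<^sup>n \<times> A\<^sub>t\<close>, with \<open>A\<^sub>t\<close> the past part of the trawl, then has finite
  mean \<open>\<nu>(\<real>\<^sup>n) Leb(A\<^sub>t)\<close>, and \<open>Leb(A\<^sub>t)\<close> is the tail integral of \<open>d\<close> over \<open>(-\<infinity>, -t]\<close>.
  The variable \<open>X\<^sub>0\<^sub>,\<^sub>t\<close> vanishes unless this count is nonzero, which has probability
  \<open>1 - exp (- \<nu>(\<real>\<^sup>n) Leb(A\<^sub>t)) \<longrightarrow> 0\<close>.\<close>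

lemma closed_int_lattice: "closed (int_lattice :: (real ^ 'n) set)"
proof -
  have "int_lattice = (\<Inter>j. (\<lambda>y::real ^ 'n. y $ j) -` \<int>)"
    by (auto simp: int_lattice_def)
  moreover have "closed ((\<lambda>y::real ^ 'n. y $ j) -` \<int>)" for j
    by (intro closed_vimage closed_Ints) (intro continuous_intros)
  ultimately show ?thesis
    by (metis closed_INT)
qed

lemma one_le_norm_int_lattice:
  assumes "y \<in> int_lattice - {0}"
  shows "1 \<le> norm (y :: real ^ 'n)"
proof -
  obtain j where "y $ j \<noteq> 0"
    using assms by (metis DiffE insertCI vec_eq_iff zero_index)
  moreover obtain k where "y $ j = of_int k"
    using assms by (auto simp: int_lattice_def elim: Ints_cases)
  ultimately have "1 \<le> \<bar>y $ j\<bar>"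
    by simp
  also have "\<dots> \<le> norm y"
    by (rule component_le_norm_cart)
  finally show ?thesis .
qed

lemma emeasure_space_lt_top_if_AE_one_le_norm:
  fixes \<nu> :: "'a::real_normed_vector measure"
  assumes "AE y in \<nu>. 1 \<le> norm y"
    and "(\<integral>\<^sup>+ y. ennreal (min 1 (norm y)) \<partial>\<nu>) < \<infinity>"
  shows "emeasure \<nu> (space \<nu>) < \<infinity>"
proof -
  have "emeasure \<nu> (space \<nu>) = (\<integral>\<^sup>+ y. 1 \<partial>\<nu>)"
    by simp
  also have "\<dots> \<le> (\<integral>\<^sup>+ y. ennreal (min 1 (norm y)) \<partial>\<nu>)"
    using assms(1) by (intro nn_integral_mono_AE) auto
  finally show ?thesis
    using assms(2) by simp
qed

lemma emeasure_UNIV_lt_top_if_int_lattice: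
  fixes \<nu> :: "(real ^ 'n) measure"
  assumes "levy_measure \<nu>"
    and "emeasure \<nu> (UNIV - (int_lattice - {0})) = 0"
    and "(\<integral>\<^sup>+ y. ennreal (min 1 (norm y)) \<partial>\<nu>) < \<infinity>"
  shows "emeasure \<nu> UNIV < \<infinity>"
proof -
  have sets: "sets \<nu> = sets borel"
    using assms(1) by (simp add: levy_measure_def)
  then have space: "space \<nu> = UNIV"
    using sets_eq_imp_space_eq by fastforce
  have "int_lattice - {0} \<in> sets \<nu>"
    unfolding sets by (intro sets.Diff borel_closed closed_int_lattice closed_singleton)
  then have "UNIV - (int_lattice - {0}) \<in> sets \<nu>"
    using space sets.compl_sets[of "int_lattice - {0}" \<nu>] by simp
  then have "AE y in \<nu>. y \<in> int_lattice - {0}"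
    using assms(2) by (intro AE_I'[of "UNIV - (int_lattice - {0})"]) (auto simp: null_sets_def)
  then have "AE y in \<nu>. 1 \<le> norm y"
    by (auto intro: one_le_norm_int_lattice)
  from emeasure_space_lt_top_if_AE_one_le_norm[OF this assms(3)] show ?thesis
    by (simp add: space)
qed

lemma tendsto_set_integral_lessThan_neg:
  fixes f :: "real \<Rightarrow> 'a::{banach, second_countable_topology}"
  assumes "set_integrable lborel {..0} f"
  shows "((\<lambda>t. LINT u:{..-t}|lborel. f u) \<longlongrightarrow> 0) at_top"
proof -
  define g where "g u = indicator {..0} u *\<^sub>R f u" for u :: real
  have g: "integrable lborel g"
    using assms unfolding g_def[abs_def] by (simp add: set_integrable_def)
  have "((\<lambda>t. LINT u|lborel. indicator {..-t} u *\<^sub>R g u) \<longlongrightarrow> (LINT (u::real)|lborel. (0::'a))) at_top"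
  proof (rule integral_dominated_convergence_at_top[where w="\<lambda>u. norm (g u)" and f="\<lambda>_. 0"
      and s="\<lambda>t u. indicator {..-t} u *\<^sub>R g u"])
    show "AE u in lborel. ((\<lambda>t. indicator {..-t} u *\<^sub>R g u) \<longlongrightarrow> 0) at_top"
    proof (rule AE_I2, rule tendsto_eventually)
      fix u :: real
      show "\<forall>\<^sub>F t in at_top. indicator {..-t} u *\<^sub>R g u = 0"
        using eventually_gt_at_top[of "-u"] by eventually_elim auto
    qed
  qed (use g in \<open>auto simp: indicator_def\<close>)
  moreover have "\<forall>\<^sub>F t in at_top. (LINT u|lborel. indicator {..-t} u *\<^sub>R g u) = (LINT u:{..-t}|lborel. f u)"
    using eventually_ge_at_top[of 0]
    by eventually_elim (auto simp: g_def set_lebesgue_integral_def indicator_def intro!: Bochner_Integration.integral_cong)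
  ultimately show ?thesis by (simp add: tendsto_cong)
qed

lemma set_integral_lessThan_nonneg:
  fixes d :: "real \<Rightarrow> real"
  assumes "\<And>s. s \<le> 0 \<Longrightarrow> 0 \<le> d s" and "0 \<le> t"
  shows "0 \<le> (LINT s:{..-t}|lborel. d s)"
  using assms unfolding set_lebesgue_integral_def
  by (intro integral_nonneg_AE) (auto simp: indicator_def)

lemma past_trawl_set_in_sets:
  assumes d_cont: "continuous_on {..0} d" and d_le_1: "\<And>s. s \<le> 0 \<Longrightarrow> d s \<le> 1"
    and "0 \<le> t"
  shows "past_trawl_set d t \<in> sets (restrict_space lborel {0..1} \<Otimes>\<^sub>M lborel)"
proof -
  \<comment> \<open>\<open>d\<close> itself need not be measurable off \<open>{..0}\<close>.\<close>
  define g where "g s = indicator {..0} s *\<^sub>R d s" for s :: real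
  have [measurable]: "g \<in> borel_measurable borel"
    unfolding g_def by (rule borel_measurable_continuous_on_indicator[OF _ d_cont]) simp
  have [measurable]: "fst \<in> borel_measurable (restrict_space lborel {0..1} \<Otimes>\<^sub>M lborel)"
    by (rule measurable_compose[OF measurable_fst measurable_restrict_space1]) simp
  have [measurable]: "snd \<in> borel_measurable (restrict_space lborel {0..1} \<Otimes>\<^sub>M (lborel::real measure))"
    by (rule measurable_compose[OF measurable_snd]) simp
  have "past_trawl_set d t = {z \<in> space (restrict_space lborel {0..1} \<Otimes>\<^sub>M lborel).
      snd z \<le> 0 \<and> 0 \<le> fst z \<and> fst z \<le> g (snd z - t)}"
  proof (intro set_eqI)
    fix z :: "real \<times> real"
    show "z \<in> past_trawl_set d t \<longleftrightarrow> z \<in> {z \<in> space (restrict_space lborel {0..1} \<Otimes>\<^sub>M lborel).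
      snd z \<le> 0 \<and> 0 \<le> fst z \<and> fst z \<le> g (snd z - t)}"
      using \<open>0 \<le> t\<close> d_le_1[of "snd z - t"]
      by (cases z) (auto simp: past_trawl_set_def g_def space_pair_measure)
  qed
  also have "\<dots> \<in> sets (restrict_space lborel {0..1} \<Otimes>\<^sub>M lborel)"
    by measurable
  finally show ?thesis .
qed

lemma emeasure_past_trawl_set:
  assumes d_cont: "continuous_on {..0} d" and d_range: "\<And>s. s \<le> 0 \<Longrightarrow> d s \<in> {0..1}"
    and "0 \<le> t"
  shows "emeasure (restrict_space lborel {0..1} \<Otimes>\<^sub>M lborel) (past_trawl_set d t)
    = (\<integral>\<^sup>+ s. ennreal (indicator {..-t} s * d s) \<partial>lborel)"
proof -
  interpret pair_sigma_finite "restrict_space lborel {0..1::real}" lborel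
    by (intro pair_sigma_finite.intro sigma_finite_measure_restrict_space
        lborel.sigma_finite_measure_axioms) simp
  have slice: "emeasure (restrict_space lborel {0..1}) ((\<lambda>x. (x, s)) -` past_trawl_set d t)
      = ennreal (indicator {..0} s * d (s - t))" for s
  proof (cases "s \<le> 0")
    case True
    then have "(\<lambda>x. (x, s)) -` past_trawl_set d t = {0..d (s - t)}" "d (s - t) \<in> {0..1}"
      using d_range[of "s - t"] \<open>0 \<le> t\<close> by (auto simp: past_trawl_set_def)
    then show ?thesis
      using True by (simp add: emeasure_restrict_space)
  qed (auto simp: past_trawl_set_def)
  have [measurable]: "(\<lambda>s. indicator {..0} s *\<^sub>R d s) \<in> borel_measurable borel"
    by (rule borel_measurable_continuous_on_indicator[OF _ d_cont]) simp
  have "emeasure (restrict_space lborel {0..1} \<Otimes>\<^sub>M lborel) (past_trawl_set d t)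
      = (\<integral>\<^sup>+ s. ennreal (indicator {..0} s * d (s - t)) \<partial>lborel)"
    using past_trawl_set_in_sets[OF d_cont _ \<open>0 \<le> t\<close>] d_range
    by (simp add: emeasure_pair_measure_alt2 slice)
  also have "\<dots> = (\<integral>\<^sup>+ s. ennreal (indicator {..-t} (-t + 1 * s) * d (-t + 1 * s)) \<partial>lborel)"
    using \<open>0 \<le> t\<close> by (intro nn_integral_cong) (simp add: indicator_def)
  also have "\<dots> = (\<integral>\<^sup>+ s. ennreal (indicator {..-t} s * d s) \<partial>lborel)"
  proof -
    have "(\<lambda>s. indicator {..-t} s * d s) = (\<lambda>s. indicator {..-t} s * (indicator {..0} s *\<^sub>R d s))"
      using \<open>0 \<le> t\<close> by (auto simp: indicator_def)
    also have "\<dots> \<in> borel_measurable borel"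
      by measurable
    finally have [measurable]: "(\<lambda>s. indicator {..-t} s * d s) \<in> borel_measurable borel" .
    have "(\<lambda>s. ennreal (indicator {..-t} s * d s)) \<in> borel_measurable borel"
      by measurable
    from nn_integral_real_affine[OF this, of 1 "-t"] show ?thesis
      by simp
  qed
  finally show ?thesis .
qed

lemma
  fixes \<nu> :: "(real ^ 'n) measure"
  assumes "sets \<nu> = sets borel" and "A \<in> sets (restrict_space lborel {0..1} \<Otimes>\<^sub>M lborel)"
  shows Times_in_sets_trawl_intensity: "UNIV \<times> A \<in> sets (trawl_intensity \<nu>)"
    and emeasure_trawl_intensity_Times: "emeasure (trawl_intensity \<nu>) (UNIV \<times> A)
      = emeasure \<nu> UNIV * emeasure (restrict_space lborel {0..1} \<Otimes>\<^sub>M lborel) A"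
proof -
  interpret sigma_finite_measure "restrict_space lborel {0..1::real} \<Otimes>\<^sub>M lborel"
    by (intro sigma_finite_pair_measure sigma_finite_measure_restrict_space
        lborel.sigma_finite_measure_axioms) simp
  have "UNIV \<in> sets \<nu>"
    using assms(1) by simp
  then show "UNIV \<times> A \<in> sets (trawl_intensity \<nu>)"
    "emeasure (trawl_intensity \<nu>) (UNIV \<times> A)
      = emeasure \<nu> UNIV * emeasure (restrict_space lborel {0..1} \<Otimes>\<^sub>M lborel) A"
    using assms(2) by (simp_all add: trawl_intensity_def emeasure_pair_measure_Times)
qed

lemma
  assumes "poisson_random_measure M \<mu> N" and "B \<in> sets \<mu>" and "emeasure \<mu> B < \<infinity>"
  shows poisson_random_measure_nonzero_in_sets: "{\<omega>\<in>space M. emeasure (N \<omega>) B \<noteq> 0} \<in> sets M"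
    and prob_poisson_random_measure_nonzero:
      "measure M {\<omega>\<in>space M. emeasure (N \<omega>) B \<noteq> 0} = 1 - exp (- enn2real (emeasure \<mu> B))"
proof -
  interpret prob_space M
    using assms(1) by (simp add: poisson_random_measure_def)
  have [measurable]: "(\<lambda>\<omega>. emeasure (N \<omega>) B) \<in> borel_measurable M"
    using assms(1,2) by (simp add: poisson_random_measure_def)
  have "measure M {\<omega>\<in>space M. emeasure (N \<omega>) B = of_nat k}
      = enn2real (emeasure \<mu> B) ^ k / fact k * exp (- enn2real (emeasure \<mu> B))" for k
    using assms unfolding poisson_random_measure_def by blast
  from this[of 0] have zero:
    "measure M {\<omega>\<in>space M. emeasure (N \<omega>) B = of_nat 0} = exp (- enn2real (emeasure \<mu> B))"
    by simp
  show "{\<omega>\<in>space M. emeasure (N \<omega>) B \<noteq> 0} \<in> sets M"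
    by measurable
  have "{\<omega>\<in>space M. emeasure (N \<omega>) B \<noteq> 0} = space M - {\<omega>\<in>space M. emeasure (N \<omega>) B = of_nat 0}"
    by auto
  then show "measure M {\<omega>\<in>space M. emeasure (N \<omega>) B \<noteq> 0} = 1 - exp (- enn2real (emeasure \<mu> B))"
    using prob_compl[of "{\<omega>\<in>space M. emeasure (N \<omega>) B = of_nat 0}"] zero by simp
qed

lemma levy_basis_comp_eq_0_if_emeasure_eq_0:
  assumes "UNIV \<times> A \<in> sets (N \<omega>)" and "emeasure (N \<omega>) (UNIV \<times> A) = 0"
  shows "levy_basis_comp N i A \<omega> = 0"
proof -
  have "AE z in N \<omega>. indicator A (snd z) * (fst z $ i) = 0"
    using assms by (intro AE_I'[of "UNIV \<times> A"]) (auto simp: null_sets_def indicator_def)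
  then show ?thesis
    unfolding levy_basis_comp_def by (rule integral_eq_zero_AE)
qed

lemma emeasure_trawl_intensity_past_trawl_set:
  fixes \<nu> :: "(real ^ 'n) measure"
  assumes "sets \<nu> = sets borel" and "emeasure \<nu> UNIV < \<infinity>"
    and d_cont: "continuous_on {..0} d" and d_range: "\<And>s. s \<le> 0 \<Longrightarrow> d s \<in> {0..1}"
    and d_int: "set_integrable lborel {..0} d" and "0 \<le> t"
  shows "emeasure (trawl_intensity \<nu>) (UNIV \<times> past_trawl_set d t)
    = ennreal (enn2real (emeasure \<nu> UNIV) * (LINT s:{..-t}|lborel. d s))"
proof -
  have "set_integrable lborel {..-t} d"
    using \<open>0 \<le> t\<close> by (intro set_integrable_subset[OF d_int]) auto
  then have "(\<integral>\<^sup>+ s. ennreal (indicator {..-t} s * d s) \<partial>lborel) = ennreal (LINT s:{..-t}|lborel. d s)"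
    using d_range \<open>0 \<le> t\<close> unfolding set_integrable_def set_lebesgue_integral_def real_scaleR_def
    by (intro nn_integral_eq_integral) (auto simp: indicator_def)
  moreover have "emeasure \<nu> UNIV = ennreal (enn2real (emeasure \<nu> UNIV))"
    using assms(2) by (simp add: ennreal_enn2real_if)
  moreover have "0 \<le> (LINT s:{..-t}|lborel. d s)"
    using d_range \<open>0 \<le> t\<close> by (intro set_integral_lessThan_nonneg) auto
  ultimately show ?thesis
    using past_trawl_set_in_sets[OF d_cont _ \<open>0 \<le> t\<close>] d_range
    by (simp add: emeasure_trawl_intensity_Times[OF assms(1)] ennreal_mult'
        emeasure_past_trawl_set[OF d_cont d_range \<open>0 \<le> t\<close>])
qed

lemma levy_basis_comp_past_trawl_set_nonzero_event:
  fixes \<nu> :: "(real ^ 'n) measure"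
  assumes "sets \<nu> = sets borel" and "emeasure \<nu> UNIV < \<infinity>"
    and prm: "poisson_random_measure M (trawl_intensity \<nu>) N"
    and d_cont: "continuous_on {..0} d" and d_range: "\<And>s. s \<le> 0 \<Longrightarrow> d s \<in> {0..1}"
    and d_int: "set_integrable lborel {..0} d" and "0 \<le> t"
  defines "Z \<equiv> {\<omega>\<in>space M. emeasure (N \<omega>) (UNIV \<times> past_trawl_set d t) \<noteq> 0}"
  shows "Z \<in> sets M"
    and "{\<omega>\<in>space M. levy_basis_comp N i (past_trawl_set d t) \<omega> \<noteq> 0} \<subseteq> Z"
    and "measure M Z = 1 - exp (- (enn2real (emeasure \<nu> UNIV) * (LINT s:{..-t}|lborel. d s)))"
proof -
  have B_sets: "UNIV \<times> past_trawl_set d t \<in> sets (trawl_intensity \<nu>)"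
    using d_range \<open>0 \<le> t\<close>
    by (intro Times_in_sets_trawl_intensity past_trawl_set_in_sets assms(1) d_cont) auto
  note B_emeasure = emeasure_trawl_intensity_past_trawl_set[OF assms(1,2) d_cont d_range d_int \<open>0 \<le> t\<close>]
  show "Z \<in> sets M"
    unfolding Z_def using B_emeasure by (intro poisson_random_measure_nonzero_in_sets[OF prm B_sets]) simp
  show "{\<omega>\<in>space M. levy_basis_comp N i (past_trawl_set d t) \<omega> \<noteq> 0} \<subseteq> Z"
    using prm B_sets unfolding Z_def poisson_random_measure_def
    by (auto intro: levy_basis_comp_eq_0_if_emeasure_eq_0)
  have "0 \<le> enn2real (emeasure \<nu> UNIV) * (LINT s:{..-t}|lborel. d s)"
    using d_range \<open>0 \<le> t\<close> by (intro mult_nonneg_nonneg enn2real_nonneg set_integral_lessThan_nonneg) auto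
  then show "measure M Z = 1 - exp (- (enn2real (emeasure \<nu> UNIV) * (LINT s:{..-t}|lborel. d s)))"
    unfolding Z_def using prob_poisson_random_measure_nonzero[OF prm B_sets] B_emeasure by simp
qed

theorem proposition6:
  fixes M :: "'w measure"
    and \<nu> :: "(real ^ 'n) measure"
    and N :: "'w \<Rightarrow> ((real ^ 'n) \<times> real \<times> real) measure"
    and i :: 'n
    and d :: "real \<Rightarrow> real"
  assumes levy: "levy_measure \<nu>"
    and conc: "emeasure \<nu> (UNIV - (int_lattice - {0})) = 0"
    and int1: "(\<integral>\<^sup>+ y. ennreal (min 1 (norm y)) \<partial>\<nu>) < \<infinity>"
    and prm: "poisson_random_measure M (trawl_intensity \<nu>) N"
    and d_cont: "continuous_on {..0} d"
    and d_range: "\<And>s. s \<le> 0 \<Longrightarrow> d s \<in> {0..1}"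
    and d_int: "set_integrable lborel {..0} d"
  shows "\<forall>\<epsilon>>0. \<exists>E. (\<forall>t. E t \<in> sets M \<and>
            {\<omega>\<in>space M. \<epsilon> < \<bar>levy_basis_comp N i (past_trawl_set d t) \<omega>\<bar>} \<subseteq> E t) \<and>
          ((\<lambda>t. measure M (E t)) \<longlongrightarrow> 0) at_top"
proof (intro allI impI)
  fix \<epsilon> :: real assume "\<epsilon> > 0"
  have sets_\<nu>: "sets \<nu> = sets borel"
    using levy by (simp add: levy_measure_def)
  note \<nu>_finite = emeasure_UNIV_lt_top_if_int_lattice[OF levy conc int1]
  note nonzero_event = levy_basis_comp_past_trawl_set_nonzero_event
    [OF sets_\<nu> \<nu>_finite prm d_cont d_range d_int, simplified]
  \<comment> \<open>For \<open>t < 0\<close> the trawl set involves \<open>d\<close> outside its domain \<open>{..0}\<close>; any bound will do there.\<close>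
  define E where "E t = (if 0 \<le> t
    then {\<omega>\<in>space M. emeasure (N \<omega>) (UNIV \<times> past_trawl_set d t) \<noteq> 0} else space M)" for t
  have "E t \<in> sets M \<and> {\<omega>\<in>space M. \<epsilon> < \<bar>levy_basis_comp N i (past_trawl_set d t) \<omega>\<bar>} \<subseteq> E t" for t
  proof (cases "0 \<le> t")
    case True
    have "{\<omega>\<in>space M. \<epsilon> < \<bar>levy_basis_comp N i (past_trawl_set d t) \<omega>\<bar>}
        \<subseteq> {\<omega>\<in>space M. levy_basis_comp N i (past_trawl_set d t) \<omega> \<noteq> 0}"
      using \<open>\<epsilon> > 0\<close> by auto
    with nonzero_event(1,2)[OF True] show ?thesis
      using True by (simp add: E_def) (meson order_trans)
  qed (simp add: E_def)
  moreover have "\<forall>\<^sub>F t in at_top. measure M (E t)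
      = 1 - exp (- (enn2real (emeasure \<nu> UNIV) * (LINT s:{..-t}|lborel. d s)))"
    using eventually_ge_at_top[of 0] by eventually_elim (simp add: E_def nonzero_event(3))
  moreover have "((\<lambda>t. 1 - exp (- (enn2real (emeasure \<nu> UNIV) * (LINT s:{..-t}|lborel. d s))))
      \<longlongrightarrow> 1 - exp (- (enn2real (emeasure \<nu> UNIV) * 0))) at_top"
    by (intro tendsto_intros tendsto_set_integral_lessThan_neg d_int)
  ultimately show "\<exists>E. (\<forall>t. E t \<in> sets M \<and>
      {\<omega>\<in>space M. \<epsilon> < \<bar>levy_basis_comp N i (past_trawl_set d t) \<omega>\<bar>} \<subseteq> E t) \<and>
      ((\<lambda>t. measure M (E t)) \<longlongrightarrow> 0) at_top"
    by (intro exI[of _ E]) (simp add: tendsto_cong)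
qed

end
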